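(* Let $G$ be a very well-covered graph. Then for every local maximum stable set $S\in\Psi(G)$, the induced subgraph $G[N[S]]$ is a König–Egerváry graph.
   Context: All graphs are finite, simple, undirected. For $A\subseteq V(G)$, $N(A)=\{v\in V(G)-A: N(v)\cap A\neq\emptyset\}$ and $N[A]=A\cup N(A)$; $G[X]$ is the subgraph induced by $X$. A stable set is a set of pairwise non-adjacent vertices; $\alpha(G)$ is the maximum size of a stable set, and $\mu(G)$ the maximum size of a matching. $G$ is a König–Egerváry graph if $\alpha(G)+\mu(G)=|V(G)|$. $G$ is well-covered if all its maximal stable sets have the same cardinality, and very well-covered if it is well-covered, has no isolated vertices, and $|V(G)|=2\alpha(G)$. A set $A\subseteq V(G)$ is a local maximum stable set of $G$ if $A$ is a maximum stable set of $G[N[A]]$; $\Psi(G)$ denotes the family of all local maximum stable sets of $G$. *)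

theory Defs
  imports Main
begin

definition simple_graph :: "'a set \<Rightarrow> 'a set set \<Rightarrow> bool" where
  "simple_graph V E \<longleftrightarrow> finite V \<and> (\<forall>e\<in>E. e \<subseteq> V \<and> card e = 2)"

definition adj :: "'a set set \<Rightarrow> 'a \<Rightarrow> 'a \<Rightarrow> bool" where
  "adj E u v \<longleftrightarrow> {u, v} \<in> E"

definition nbhd :: "'a set \<Rightarrow> 'a set set \<Rightarrow> 'a \<Rightarrow> 'a set" where
  "nbhd V E v = {u\<in>V. adj E v u}"

definition open_nbhd_set :: "'a set \<Rightarrow> 'a set set \<Rightarrow> 'a set \<Rightarrow> 'a set" where
  "open_nbhd_set V E A = {v \<in> V - A. nbhd V E v \<inter> A \<noteq> {}}"

definition closed_nbhd_set :: "'a set \<Rightarrow> 'a set set \<Rightarrow> 'a set \<Rightarrow> 'a set" where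
  "closed_nbhd_set V E A = A \<union> open_nbhd_set V E A"

definition induced_edges :: "'a set set \<Rightarrow> 'a set \<Rightarrow> 'a set set" where
  "induced_edges E X = {e \<in> E. e \<subseteq> X}"

definition stable_set :: "'a set \<Rightarrow> 'a set set \<Rightarrow> 'a set \<Rightarrow> bool" where
  "stable_set V E S \<longleftrightarrow> S \<subseteq> V \<and> (\<forall>u\<in>S. \<forall>v\<in>S. \<not> adj E u v)"

definition max_stable_set :: "'a set \<Rightarrow> 'a set set \<Rightarrow> 'a set \<Rightarrow> bool" where
  "max_stable_set V E S \<longleftrightarrow> stable_set V E S \<and>
     (\<forall>T. stable_set V E T \<longrightarrow> card T \<le> card S)"

definition maximal_stable_set :: "'a set \<Rightarrow> 'a set set \<Rightarrow> 'a set \<Rightarrow> bool" where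
  "maximal_stable_set V E S \<longleftrightarrow> stable_set V E S \<and>
     (\<forall>T. stable_set V E T \<and> S \<subseteq> T \<longrightarrow> T = S)"

definition alpha :: "'a set \<Rightarrow> 'a set set \<Rightarrow> nat" where
  "alpha V E = Max (card ` {S. stable_set V E S})"

definition matching :: "'a set set \<Rightarrow> 'a set set \<Rightarrow> bool" where
  "matching E M \<longleftrightarrow> M \<subseteq> E \<and> (\<forall>e1\<in>M. \<forall>e2\<in>M. e1 \<noteq> e2 \<longrightarrow> e1 \<inter> e2 = {})"

definition mu :: "'a set set \<Rightarrow> nat" where
  "mu E = Max (card ` {M. matching E M})"

definition koenig_egervary :: "'a set \<Rightarrow> 'a set set \<Rightarrow> bool" where
  "koenig_egervary V E \<longleftrightarrow> alpha V E + mu E = card V"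

definition well_covered :: "'a set \<Rightarrow> 'a set set \<Rightarrow> bool" where
  "well_covered V E \<longleftrightarrow>
     (\<forall>S T. maximal_stable_set V E S \<and> maximal_stable_set V E T \<longrightarrow> card S = card T)"

definition very_well_covered :: "'a set \<Rightarrow> 'a set set \<Rightarrow> bool" where
  "very_well_covered V E \<longleftrightarrow> well_covered V E \<and>
     (\<forall>v\<in>V. nbhd V E v \<noteq> {}) \<and> card V = 2 * alpha V E"

definition local_max_stable :: "'a set \<Rightarrow> 'a set set \<Rightarrow> 'a set \<Rightarrow> bool" where
  "local_max_stable V E A \<longleftrightarrow> A \<subseteq> V \<and>
     max_stable_set (closed_nbhd_set V E A)
       (induced_edges E (closed_nbhd_set V E A)) A"

definition Psi :: "'a set \<Rightarrow> 'a set set \<Rightarrow> 'a set set" where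
  "Psi V E = {A. local_max_stable V E A}"

end

theory Submission
  imports Defs
begin

text \<open>
  The proof follows Favaron's characterisation of very well-covered graphs.  For a well-covered graph without isolated vertices, an exchange
  argument shows that every maximum stable set S0 satisfies Hall's condition towards its
  neighbourhood; since |V| = 2 alpha, the resulting matching is perfect, and as every maximal
  stable set has alpha vertices, each of them contains an end of every matching edge
  (property P).  Presenting the perfect matching as an involution p, property P forces p to map
  N(S) into S whenever S is a local maximum stable set.  In G[N[S]] the set S is a maximum
  stable set and the edges {v, p v} for v in N(S) form a matching saturating N[S] - S, which
  is exactly the Koenig-Egervary property.
\<close>

definition sdr :: "'i set \<Rightarrow> ('i \<Rightarrow> 'b set) \<Rightarrow> ('i \<Rightarrow> 'b) \<Rightarrow> bool" where
  "sdr X R f \<longleftrightarrow> inj_on f X \<and> (\<forall>a\<in>X. f a \<in> R a)"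

definition hall_condition :: "'i set \<Rightarrow> ('i \<Rightarrow> 'b set) \<Rightarrow> bool" where
  "hall_condition X R \<longleftrightarrow> (\<forall>A\<subseteq>X. card A \<le> card (\<Union>(R ` A)))"

lemma hall_condition_subset: "hall_condition X R \<Longrightarrow> A \<subseteq> X \<Longrightarrow> hall_condition A R"
  by (auto simp: hall_condition_def)

lemma hall_residual_tight:
  assumes hall: "hall_condition X R" and fin: "finite X" "\<forall>a\<in>X. finite (R a)"
    and A: "A \<subseteq> X" "card (\<Union>(R ` A)) = card A"
  shows "hall_condition (X - A) (\<lambda>a. R a - \<Union>(R ` A))"
  unfolding hall_condition_def
proof (intro allI impI)
  fix B assume B: "B \<subseteq> X - A"
  define U where "U = \<Union>(R ` A)"
  have finA: "finite A" and finB: "finite B" using A(1) B fin(1) finite_subset by blast+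
  have finU: "finite U" and finRB: "finite (\<Union>a\<in>B. R a - U)"
    unfolding U_def using finA finB A(1) B fin(2) by blast+
  have "B \<inter> A = {}" using B by blast
  then have "card B + card A = card (B \<union> A)"
    using card_Un_disjoint[OF finB finA] by simp
  also have "\<dots> \<le> card (\<Union>(R ` (B \<union> A)))"
    using hall B A(1) unfolding hall_condition_def by (meson Diff_subset le_sup_iff subset_trans)
  also have "\<Union>(R ` (B \<union> A)) = (\<Union>a\<in>B. R a - U) \<union> U" unfolding U_def by auto
  also have "card \<dots> = card (\<Union>a\<in>B. R a - U) + card A"
    using card_Un_disjoint[OF finRB finU] A(2) unfolding U_def by auto
  finally show "card B \<le> card (\<Union>a\<in>B. R a - \<Union>(R ` A))" unfolding U_def by simp
qed

lemma hall_residual_surplus: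
  assumes fin: "finite X" "\<forall>a\<in>X. finite (R a)" and x: "x \<in> X"
    and surplus: "\<And>B. B \<noteq> {} \<Longrightarrow> B \<subset> X \<Longrightarrow> card B < card (\<Union>(R ` B))"
  shows "hall_condition (X - {x}) (\<lambda>a. R a - {y})"
  unfolding hall_condition_def
proof (intro allI impI)
  fix B assume B: "B \<subseteq> X - {x}"
  show "card B \<le> card (\<Union>a\<in>B. R a - {y})"
  proof (cases "B = {}")
    case False
    have "finite (\<Union>(R ` B))" using B fin finite_subset by blast
    moreover have "card B < card (\<Union>(R ` B))" using surplus[OF False] B x by blast
    moreover have "(\<Union>a\<in>B. R a - {y}) = \<Union>(R ` B) - {y}" by auto
    moreover have "card (\<Union>(R ` B)) \<le> card (\<Union>(R ` B) - {y}) + 1"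
      by (cases "y \<in> \<Union>(R ` B)") (simp_all add: card_Diff_singleton_if)
    ultimately show ?thesis by simp
  qed simp
qed

lemma sdr_glue:
  assumes "sdr A R f1" "f1 ` A \<subseteq> U" "sdr (X - A) (\<lambda>a. R a - U) f2" "A \<subseteq> X"
  shows "sdr X R (\<lambda>a. if a \<in> A then f1 a else f2 a)" (is "sdr X R ?f")
proof -
  have "inj_on ?f (A \<union> (X - A))"
    unfolding inj_on_Un using assms by (auto simp: sdr_def inj_on_def)
  moreover have "A \<union> (X - A) = X" using assms(4) by blast
  ultimately show ?thesis using assms by (auto simp: sdr_def)
qed

text \<open>Hall's marriage theorem (Halmos-Vaughan proof, by induction on |X|: split along a
  tight subfamily if there is one, otherwise match one member greedily).\<close>
theorem hall_marriage:
  fixes X :: "'i set" and R :: "'i \<Rightarrow> 'b set"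
  assumes "finite X" "\<forall>a\<in>X. finite (R a)" "hall_condition X R"
  shows "\<exists>f. sdr X R f"
  using assms
proof (induction "card X" arbitrary: X R rule: less_induct)
  case less
  note fin = less.prems(1,2) and hall = less.prems(3)
  have IH: "\<exists>f. sdr Y R' f" if "Y \<subset> X" "\<forall>a\<in>Y. finite (R' a)" "hall_condition Y R'"
    for Y and R' :: "'i \<Rightarrow> 'b set"
  proof -
    have "finite Y" using that(1) fin(1) finite_subset by blast
    then show ?thesis using less.hyps[OF psubset_card_mono[OF fin(1) that(1)] \<open>finite Y\<close> that(2,3)] by simp
  qed
  show ?case
  proof (cases "\<exists>A. A \<noteq> {} \<and> A \<subset> X \<and> card (\<Union>(R ` A)) \<le> card A")
    case True
    then obtain A where A: "A \<noteq> {}" "A \<subset> X" "card (\<Union>(R ` A)) \<le> card A" by blast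
    have "card A \<le> card (\<Union>(R ` A))" using hall A(2) unfolding hall_condition_def by blast
    then have tight: "card (\<Union>(R ` A)) = card A" using A(3) by simp
    have "\<forall>a\<in>A. finite (R a)" using fin(2) A(2) by blast
    then obtain f1 where f1: "sdr A R f1"
      using IH[OF A(2)] hall_condition_subset[OF hall psubset_imp_subset[OF A(2)]] by blast
    have "X - A \<subset> X" using A(1,2) by blast
    moreover have "\<forall>a\<in>X - A. finite (R a - \<Union>(R ` A))" using fin(2) by blast
    ultimately obtain f2 where f2: "sdr (X - A) (\<lambda>a. R a - \<Union>(R ` A)) f2"
      using IH[OF _ _ hall_residual_tight[OF hall fin psubset_imp_subset[OF A(2)] tight]] by blast
    have "f1 ` A \<subseteq> \<Union>(R ` A)" using f1 by (auto simp: sdr_def)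
    then show ?thesis using sdr_glue[OF f1 _ f2 psubset_imp_subset[OF A(2)]] by blast
  next
    case False
    then have surplus: "\<And>B. B \<noteq> {} \<Longrightarrow> B \<subset> X \<Longrightarrow> card B < card (\<Union>(R ` B))"
      by (meson not_le)
    show ?thesis
    proof (cases "X = {}")
      case True then show ?thesis by (auto simp: sdr_def)
    next
      case False
      then obtain x where x: "x \<in> X" by blast
      have "card {x} \<le> card (\<Union>(R ` {x}))" using hall x unfolding hall_condition_def by blast
      then have "R x \<noteq> {}" by auto
      then obtain y where y: "y \<in> R x" by blast
      have "X - {x} \<subset> X" using x by blast
      moreover have "\<forall>a\<in>X - {x}. finite (R a - {y})" using fin(2) by blast
      ultimately obtain f2 where f2: "sdr (X - {x}) (\<lambda>a. R a - {y}) f2"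
        using IH[OF _ _ hall_residual_surplus[OF fin x surplus, of y]] by blast
      have "sdr {x} R (\<lambda>_. y)" using y by (simp add: sdr_def)
      moreover have "(\<lambda>_. y) ` {x} \<subseteq> {y}" by simp
      ultimately show ?thesis using sdr_glue[of "{x}" R "\<lambda>_. y" "{y}" X f2] f2 x by blast
    qed
  qed
qed

lemma simple_graph_finite: "simple_graph V E \<Longrightarrow> finite V"
  by (simp add: simple_graph_def)

lemma adj_sym: "adj E u v \<Longrightarrow> adj E v u"
  by (simp add: adj_def insert_commute)

lemma adjD:
  assumes "simple_graph V E" "adj E u v"
  shows "u \<in> V" "v \<in> V" "u \<noteq> v"
proof -
  have "{u, v} \<in> E" using assms(2) by (simp add: adj_def)
  then have "{u, v} \<subseteq> V" "card {u, v} = 2" using assms(1) by (auto simp: simple_graph_def)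
  then show "u \<in> V" "v \<in> V" "u \<noteq> v" by auto
qed

lemma stable_subset: "stable_set V E T \<Longrightarrow> S \<subseteq> T \<Longrightarrow> stable_set V E S"
  by (auto simp: stable_set_def)

lemma stable_insert:
  assumes "simple_graph V E" "stable_set V E I" "c \<in> V" "\<forall>i\<in>I. \<not> adj E c i"
  shows "stable_set V E (insert c I)"
  unfolding stable_set_def
proof (intro conjI ballI)
  show "insert c I \<subseteq> V" using assms(2,3) by (simp add: stable_set_def)
  fix u v assume "u \<in> insert c I" "v \<in> insert c I"
  then show "\<not> adj E u v"
    using assms(2,4) adjD(3)[OF assms(1), of c c] adj_sym[of E u v] unfolding stable_set_def
    by auto
qed

lemma stable_sets_finite: "finite V \<Longrightarrow> finite {S. stable_set V E S}"
  by (rule finite_subset[of _ "Pow V"]) (auto simp: stable_set_def)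

lemma stable_card_le_alpha: "finite V \<Longrightarrow> stable_set V E S \<Longrightarrow> card S \<le> alpha V E"
  unfolding alpha_def using stable_sets_finite by (intro Max_ge) auto

lemma alpha_attained:
  assumes "finite V"
  obtains S where "stable_set V E S" "card S = alpha V E"
proof -
  have "stable_set V E {}" by (simp add: stable_set_def)
  then have "alpha V E \<in> card ` {S. stable_set V E S}"
    unfolding alpha_def using stable_sets_finite[OF assms] by (intro Max_in) auto
  then show ?thesis using that by auto
qed

lemma alpha_max_stable: "finite V \<Longrightarrow> max_stable_set V E S \<Longrightarrow> alpha V E = card S"
proof -
  assume finV: "finite V" and S: "max_stable_set V E S"
  obtain T where "stable_set V E T" "card T = alpha V E" using alpha_attained[OF finV] .
  then show "alpha V E = card S"
    using S stable_card_le_alpha[OF finV] unfolding max_stable_set_def by (metis le_antisym)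
qed

text \<open>Every vertex set C contains a stable subset that is maximal inside C; such a set
  dominates C.\<close>
lemma dominating_stable_subset:
  assumes "simple_graph V E" "C \<subseteq> V"
  obtains I where "I \<subseteq> C" "stable_set V E I" "\<forall>c\<in>C - I. \<exists>i\<in>I. adj E c i"
proof -
  define F where "F = {I. I \<subseteq> C \<and> stable_set V E I}"
  have finF: "finite F"
    using stable_sets_finite[OF simple_graph_finite[OF assms(1)]] unfolding F_def
    by (rule rev_finite_subset) blast
  have "{} \<in> F" unfolding F_def by (simp add: stable_set_def)
  with finF obtain I where I: "I \<in> F" "\<And>J. J \<in> F \<Longrightarrow> I \<subseteq> J \<Longrightarrow> I = J"
    using finite_has_maximal[of F] by blast
  have stI: "I \<subseteq> C" "stable_set V E I" using I(1) unfolding F_def by blast+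
  have "\<exists>i\<in>I. adj E c i" if c: "c \<in> C - I" for c
  proof (rule ccontr)
    assume "\<not> (\<exists>i\<in>I. adj E c i)"
    then have "stable_set V E (insert c I)"
      using stable_insert[OF assms(1) stI(2)] c assms(2) by blast
    then have "insert c I \<in> F" using stI(1) c unfolding F_def by blast
    then show False using I(2)[of "insert c I"] c by blast
  qed
  with stI show ?thesis using that by blast
qed

lemma maximal_stable_extension:
  assumes "simple_graph V E" "stable_set V E Y"
  obtains T where "maximal_stable_set V E T" "Y \<subseteq> T"
proof -
  define F where "F = {T. stable_set V E T \<and> Y \<subseteq> T}"
  have finF: "finite F"
    using stable_sets_finite[OF simple_graph_finite[OF assms(1)]] unfolding F_def
    by (rule rev_finite_subset) blast
  have "Y \<in> F" using assms(2) unfolding F_def by blast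
  with finF obtain T where T: "T \<in> F" "\<And>T'. T' \<in> F \<Longrightarrow> T \<subseteq> T' \<Longrightarrow> T = T'"
    using finite_has_maximal[of F] by blast
  have stT: "stable_set V E T" "Y \<subseteq> T" using T(1) unfolding F_def by blast+
  have "maximal_stable_set V E T"
    unfolding maximal_stable_set_def
  proof (intro conjI allI impI)
    fix T' assume "stable_set V E T' \<and> T \<subseteq> T'"
    then show "T' = T" using T(2)[of T'] stT(2) unfolding F_def by auto
  qed (fact stT(1))
  then show ?thesis using that stT(2) by blast
qed

lemma well_covered_card:
  assumes "simple_graph V E" "well_covered V E" "maximal_stable_set V E T"
  shows "card T = alpha V E"
proof -
  have finV: "finite V" using assms(1) by (rule simple_graph_finite)
  obtain S where S: "stable_set V E S" "card S = alpha V E"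
    using alpha_attained[OF finV] by blast
  have "maximal_stable_set V E S"
    unfolding maximal_stable_set_def
  proof (intro conjI allI impI)
    fix T' assume T': "stable_set V E T' \<and> S \<subseteq> T'"
    then have "finite T'" using finV by (auto simp: stable_set_def intro: finite_subset)
    moreover have "card T' \<le> card S" using stable_card_le_alpha[OF finV] T' S(2) by auto
    ultimately show "T' = S" using T' card_seteq by blast
  qed (fact S(1))
  then show ?thesis using assms(2,3) S(2) unfolding well_covered_def by metis
qed

lemma adj_induced: "adj (induced_edges E X) u v \<longleftrightarrow> adj E u v \<and> u \<in> X \<and> v \<in> X"
  by (auto simp: adj_def induced_edges_def)

lemma stable_induced_iff:
  "X \<subseteq> V \<Longrightarrow> stable_set X (induced_edges E X) S \<longleftrightarrow> S \<subseteq> X \<and> stable_set V E S"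
  unfolding stable_set_def adj_induced by blast

lemma simple_graph_induced:
  "simple_graph V E \<Longrightarrow> X \<subseteq> V \<Longrightarrow> simple_graph X (induced_edges E X)"
  using finite_subset[of X V] by (auto simp: simple_graph_def induced_edges_def)

text \<open>Every edge of a matching has an end outside a given stable set, so \<mu> \<le> |V - S|.\<close>
lemma matching_card_le_complement:
  assumes sg: "simple_graph V E" and S: "stable_set V E S" and M: "matching E M"
  shows "card M \<le> card (V - S)"
proof -
  have out: "\<exists>x. x \<in> e \<and> x \<notin> S" if e: "e \<in> M" for e
  proof -
    have eE: "e \<in> E" using M e by (auto simp: matching_def)
    then obtain u w where uw: "e = {u, w}" "u \<noteq> w"
      using sg by (auto simp: simple_graph_def card_2_iff)
    then have "adj E u w" using eE by (simp add: adj_def)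
    then show ?thesis using S uw(1) unfolding stable_set_def by blast
  qed
  define g where "g e = (SOME x. x \<in> e \<and> x \<notin> S)" for e :: "'a set"
  have g: "g e \<in> e" "g e \<notin> S" if "e \<in> M" for e
    using someI_ex[OF out[OF that]] unfolding g_def by blast+
  have "inj_on g M"
  proof (rule inj_onI)
    fix e1 e2 assume e: "e1 \<in> M" "e2 \<in> M" "g e1 = g e2"
    then have "e1 \<inter> e2 \<noteq> {}" using g(1)[of e1] g(1)[of e2] by auto
    then show "e1 = e2" using M e(1,2) unfolding matching_def by blast
  qed
  moreover have "g ` M \<subseteq> V - S"
  proof
    fix x assume "x \<in> g ` M"
    then obtain e where e: "e \<in> M" "x = g e" by blast
    then have "e \<subseteq> V" using M sg unfolding matching_def simple_graph_def by blast
    then show "x \<in> V - S" using g[OF e(1)] e(2) by blast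
  qed
  ultimately show ?thesis
    using simple_graph_finite[OF sg] by (intro card_inj_on_le) auto
qed

lemma koenig_egervary_witness:
  assumes sg: "simple_graph V E" and S: "max_stable_set V E S"
    and M: "matching E M" "card M = card (V - S)"
  shows "koenig_egervary V E"
proof -
  have finV: "finite V" using sg by (rule simple_graph_finite)
  have SV: "S \<subseteq> V" and stS: "stable_set V E S"
    using S by (auto simp: max_stable_set_def stable_set_def)
  have "{M. matching E M} \<subseteq> Pow E" by (auto simp: matching_def)
  moreover have "finite E"
    using finV sg finite_Pow_iff[of V] unfolding simple_graph_def by (meson finite_subset subsetI PowI)
  ultimately have finM: "finite {M. matching E M}" by (simp add: finite_subset)
  have "mu E = card M"
    unfolding mu_def
  proof (rule antisym)
    show "Max (card ` {M. matching E M}) \<le> card M"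
      using finM M matching_card_le_complement[OF sg stS] by (intro Max.boundedI) auto
    show "card M \<le> Max (card ` {M. matching E M})"
      using finM M(1) by (intro Max_ge) auto
  qed
  moreover have "card V = card S + card (V - S)"
    using finV SV card_Diff_subset[of S V] card_mono[of V S] finite_subset[of S V] by simp
  ultimately show ?thesis
    unfolding koenig_egervary_def using alpha_max_stable[OF finV S] M(2) by simp
qed

text \<open>N(A) including vertices of A itself: the union of the neighbourhoods of A.\<close>
definition nbrs :: "'a set \<Rightarrow> 'a set set \<Rightarrow> 'a set \<Rightarrow> 'a set" where
  "nbrs V E A = \<Union>(nbhd V E ` A)"

lemma nbrs_iff: "c \<in> nbrs V E A \<longleftrightarrow> c \<in> V \<and> (\<exists>a\<in>A. adj E a c)"
  by (auto simp: nbrs_def nbhd_def)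

lemma nbrs_subset: "nbrs V E A \<subseteq> V"
  by (auto simp: nbrs_iff)

lemma stable_union_non_nbrs:
  assumes S: "stable_set V E S" and J: "stable_set V E J"
  shows "stable_set V E (J \<union> (S - nbrs V E J))"
proof -
  have SV: "S \<subseteq> V" and JV: "J \<subseteq> V" using S J by (auto simp: stable_set_def)
  have cross: "\<not> adj E u v" if "u \<in> J" "v \<in> S - nbrs V E J" for u v
    using that SV by (auto simp: nbrs_iff)
  show ?thesis
    unfolding stable_set_def
  proof (intro conjI ballI)
    show "J \<union> (S - nbrs V E J) \<subseteq> V" using SV JV by blast
    fix u v assume "u \<in> J \<union> (S - nbrs V E J)" "v \<in> J \<union> (S - nbrs V E J)"
    then consider "u \<in> J" "v \<in> J" | "u \<in> S" "v \<in> S"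
      | "u \<in> J" "v \<in> S - nbrs V E J" | "v \<in> J" "u \<in> S - nbrs V E J" by blast
    then show "\<not> adj E u v"
    proof cases
      case 4 then show ?thesis using cross[of v u] adj_sym[of E u v] by blast
    qed (use S J cross in \<open>auto simp: stable_set_def\<close>)
  qed
qed

lemma maximum_stable_expansion:
  assumes finV: "finite V" and S: "stable_set V E S" "card S = alpha V E"
    and J: "stable_set V E J" "J \<inter> S = {}"
  shows "card J \<le> card (S \<inter> nbrs V E J)"
proof -
  have "S \<subseteq> V" "J \<subseteq> V" using S(1) J(1) by (auto simp: stable_set_def)
  then have finS: "finite S" and finJ: "finite J" using finite_subset finV by auto
  have "card J + card (S - nbrs V E J) = card (J \<union> (S - nbrs V E J))"
    using J(2) finS finJ by (intro card_Un_disjoint[symmetric]) auto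
  also have "\<dots> \<le> card S"
    using stable_card_le_alpha[OF finV stable_union_non_nbrs[OF S(1) J(1)]] S(2) by simp
  finally show ?thesis
    using card_Diff_subset_Int[of S "nbrs V E J"] finS card_mono[OF finS, of "S \<inter> nbrs V E J"]
    by auto
qed

text \<open>Extending I \<union> (S - N(I)) to a maximal stable set T,
  the vertices J of T outside I \<union> S are not adjacent to A, and counting |T| = |S| shows that
  I has at least as many vertices as its neighbours in A.\<close>
lemma well_covered_exchange:
  assumes sg: "simple_graph V E" and wc: "well_covered V E"
    and S: "stable_set V E S" "card S = alpha V E" and AS: "A \<subseteq> S"
    and I: "I \<subseteq> nbrs V E A" "stable_set V E I" "\<forall>c\<in>nbrs V E A - I. \<exists>i\<in>I. adj E c i"
  shows "card (A \<inter> nbrs V E I) \<le> card I"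
proof -
  have finV: "finite V" using sg by (rule simple_graph_finite)
  have SV: "S \<subseteq> V" and IV: "I \<subseteq> V" using S(1) I(2) by (auto simp: stable_set_def)
  have finS: "finite S" and finI: "finite I" using SV IV finV finite_subset by auto
  obtain T where T: "maximal_stable_set V E T" "I \<union> (S - nbrs V E I) \<subseteq> T"
    using maximal_stable_extension[OF sg stable_union_non_nbrs[OF S(1) I(2)]] by blast
  have stT: "stable_set V E T" using T(1) by (simp add: maximal_stable_set_def)
  have indepT: "\<not> adj E u v" if "u \<in> T" "v \<in> T" for u v
    using stT that by (simp add: stable_set_def)
  have cardT: "card T = card S" using well_covered_card[OF sg wc T(1)] S(2) by simp
  define J where "J = T - I - S"
  have finJ: "finite J" using stT finV unfolding J_def stable_set_def by (meson Diff_subset finite_subset)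
  have "T \<subseteq> I \<union> (S - nbrs V E I) \<union> J"
  proof
    fix t assume t: "t \<in> T"
    have "t \<notin> nbrs V E I" using t T(2) indepT unfolding nbrs_iff by blast
    then show "t \<in> I \<union> (S - nbrs V E I) \<union> J" using t unfolding J_def by blast
  qed
  then have boundT: "card S \<le> card I + card (S - nbrs V E I) + card J"
    using cardT card_mono[of "I \<union> (S - nbrs V E I) \<union> J" T] finI finS finJ
      card_Un_le[of "I \<union> (S - nbrs V E I)" J] card_Un_le[of I "S - nbrs V E I"] by simp
  have boundJ: "card J \<le> card (S \<inter> nbrs V E J)"
  proof (rule maximum_stable_expansion[OF finV S])
    have "J \<subseteq> T" unfolding J_def by blast
    then show "stable_set V E J" by (rule stable_subset[OF stT])
    show "J \<inter> S = {}" unfolding J_def by blast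
  qed
  have "S \<inter> nbrs V E J \<subseteq> (S \<inter> nbrs V E I) - (A \<inter> nbrs V E I)"
  proof
    fix s assume s: "s \<in> S \<inter> nbrs V E J"
    then obtain j where j: "j \<in> J" "adj E j s" by (auto simp: nbrs_iff)
    have jT: "j \<in> T" "j \<notin> I" using j(1) unfolding J_def by auto
    have "s \<in> nbrs V E I"
      using s T(2) indepT[OF jT(1), of s] j(2) by blast
    moreover have "s \<notin> A"
    proof
      assume "s \<in> A"
      then have "j \<in> nbrs V E A - I"
        using jT(2) adjD(1)[OF sg j(2)] adj_sym[OF j(2)] by (auto simp: nbrs_iff)
      then obtain i where "i \<in> I" "adj E j i" using I(3) by blast
      then show False using indepT[OF jT(1)] T(2) by blast
    qed
    ultimately show "s \<in> (S \<inter> nbrs V E I) - (A \<inter> nbrs V E I)" using s by blast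
  qed
  then have "card (S \<inter> nbrs V E J) \<le> card ((S \<inter> nbrs V E I) - (A \<inter> nbrs V E I))"
    using finS by (intro card_mono) auto
  also have "\<dots> = card (S \<inter> nbrs V E I) - card (A \<inter> nbrs V E I)"
    using AS finite_subset[OF AS finS] by (intro card_Diff_subset) auto
  finally have boundK: "card (S \<inter> nbrs V E J) \<le> card (S \<inter> nbrs V E I) - card (A \<inter> nbrs V E I)" .
  moreover have "card (S - nbrs V E I) = card S - card (S \<inter> nbrs V E I)"
    using finS by (intro card_Diff_subset_Int) auto
  moreover have "card (A \<inter> nbrs V E I) \<le> card (S \<inter> nbrs V E I)"
    using AS finS by (intro card_mono) auto
  moreover have "card (S \<inter> nbrs V E I) \<le> card S" using finS by (intro card_mono) auto
  ultimately show ?thesis using boundT boundJ by linarith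
qed

text \<open>Induction on A \<subseteq> S: choose a stable I dominating
  N(A); the exchange lemma bounds A \<inter> N(I) by |I|, and the induction hypothesis applies to
  the smaller set A - N(I), whose neighbours lie in N(A) - I.\<close>
lemma well_covered_hall_condition:
  assumes sg: "simple_graph V E" and wc: "well_covered V E"
    and no_isolated: "\<forall>v\<in>V. nbhd V E v \<noteq> {}"
    and S: "stable_set V E S" "card S = alpha V E"
  shows "hall_condition S (nbhd V E)"
proof -
  have finV: "finite V" using sg by (rule simple_graph_finite)
  have SV: "S \<subseteq> V" using S(1) by (simp add: stable_set_def)
  have "card A \<le> card (nbrs V E A)" if AS: "A \<subseteq> S" for A
  proof -
    have "finite A" using AS SV finite_subset[OF _ finV] by blast
    then show ?thesis using AS
    proof (induction A rule: finite_psubset_induct)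
      case (psubset A)
      show ?case
      proof (cases "A = {}")
        case False
        then obtain a where a: "a \<in> A" by blast
        then obtain c where "c \<in> nbhd V E a" using no_isolated psubset.prems SV by blast
        then have c: "c \<in> nbrs V E A" using a unfolding nbrs_def by blast
        obtain I where I: "I \<subseteq> nbrs V E A" "stable_set V E I"
          "\<forall>c\<in>nbrs V E A - I. \<exists>i\<in>I. adj E c i"
          using dominating_stable_subset[OF sg nbrs_subset] by blast
        have "I \<noteq> {}" using I(3) c by blast
        then obtain i where i: "i \<in> I" by blast
        then have "i \<in> nbrs V E A" using I(1) by blast
        then obtain a' where a': "a' \<in> A" "adj E a' i" unfolding nbrs_iff by blast
        have "a' \<in> nbrs V E I"
          using i adjD(1)[OF sg a'(2)] adj_sym[OF a'(2)] by (auto simp: nbrs_iff)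
        then have smaller: "A - nbrs V E I \<subset> A" using a'(1) by blast
        have "nbrs V E (A - nbrs V E I) \<subseteq> nbrs V E A - I"
        proof
          fix x assume "x \<in> nbrs V E (A - nbrs V E I)"
          then obtain b where b: "x \<in> V" "b \<in> A" "b \<notin> nbrs V E I" "adj E b x"
            unfolding nbrs_iff[where c = x] by blast
          have "x \<notin> I"
          proof
            assume "x \<in> I"
            then have "b \<in> nbrs V E I"
              using adjD(1)[OF sg b(4)] adj_sym[OF b(4)] unfolding nbrs_iff[where c = b] by blast
            then show False using b(3) by blast
          qed
          moreover have "x \<in> nbrs V E A" using b(1,2,4) unfolding nbrs_iff by blast
          ultimately show "x \<in> nbrs V E A - I" by blast
        qed
        moreover have finN: "finite (nbrs V E A)" using finite_subset[OF nbrs_subset finV] .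
        ultimately have "card (nbrs V E (A - nbrs V E I)) \<le> card (nbrs V E A) - card I"
          using card_mono[of "nbrs V E A - I"] card_Diff_subset[OF finite_subset[OF I(1) finN] I(1)]
          by simp
        moreover have "card A = card (A - nbrs V E I) + card (A \<inter> nbrs V E I)"
          using psubset.hyps(1) card_Diff_subset_Int[of A "nbrs V E I"]
            card_mono[of A "A \<inter> nbrs V E I"] by simp
        moreover have "card (A - nbrs V E I) \<le> card (nbrs V E (A - nbrs V E I))"
          using psubset.IH[OF smaller] psubset.prems by blast
        moreover have "card (A \<inter> nbrs V E I) \<le> card I"
          using well_covered_exchange[OF sg wc S psubset.prems I] .
        moreover have "card I \<le> card (nbrs V E A)" using I(1) finN by (rule card_mono[rotated])
        ultimately show ?thesis by linarith
      qed simp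
    qed
  qed
  then show ?thesis unfolding hall_condition_def nbrs_def by blast
qed

text \<open>A perfect matching presented as a fixed-point-free involution of V along edges.\<close>
definition matching_involution :: "'a set \<Rightarrow> 'a set set \<Rightarrow> ('a \<Rightarrow> 'a) \<Rightarrow> bool" where
  "matching_involution V E p \<longleftrightarrow> (\<forall>x\<in>V. p x \<in> V \<and> adj E x (p x) \<and> p (p x) = x)"

definition property_P :: "'a set \<Rightarrow> 'a set set \<Rightarrow> ('a \<Rightarrow> 'a) \<Rightarrow> bool" where
  "property_P V E p \<longleftrightarrow>
     (\<forall>T x. maximal_stable_set V E T \<longrightarrow> x \<in> V \<longrightarrow> x \<notin> T \<longrightarrow> p x \<in> T)"

lemma matching_involution_of_bij:
  assumes SV: "S \<subseteq> V" and f: "bij_betw f S (V - S)" "\<forall>a\<in>S. adj E a (f a)"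
  obtains p where "matching_involution V E p" "\<forall>x\<in>V - S. p x \<in> S"
proof -
  define p where "p x = (if x \<in> S then f x else inv_into S f x)" for x
  have inj: "inj_on f S" and img: "f ` S = V - S" using f(1) by (auto simp: bij_betw_def)
  have onS: "p x \<in> V \<and> adj E x (p x) \<and> p (p x) = x" if x: "x \<in> S" for x
  proof -
    have "f x \<in> V - S" using img x by blast
    then show ?thesis using x f(2) inv_into_f_f[OF inj x] unfolding p_def by simp
  qed
  have offS: "p x \<in> S \<and> adj E x (p x) \<and> p (p x) = x" if x: "x \<in> V - S" for x
  proof -
    have "x \<in> f ` S" using img x by blast
    then have y: "inv_into S f x \<in> S" "f (inv_into S f x) = x"
      by (auto intro: inv_into_into f_inv_into_f)
    then show ?thesis using x f(2) adj_sym[of E "inv_into S f x" x] unfolding p_def by auto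
  qed
  have "matching_involution V E p"
    unfolding matching_involution_def using onS offS SV by blast
  then show ?thesis using that offS by blast
qed

text \<open>If p maps V - S0 into S0, then assigning to each vertex the end of its matching edge
  in S0 is injective on a stable set T; if T misses the edge at x, T is smaller than S0.\<close>
lemma stable_missing_edge_card:
  assumes finS0: "finite S0" and p: "matching_involution V E p" "\<forall>x\<in>V - S0. p x \<in> S0"
    and T: "stable_set V E T" and x: "x \<in> V" "x \<notin> T" "p x \<notin> T"
  shows "card T < card S0"
proof -
  define r where "r t = (if t \<in> S0 then t else p t)" for t
  have pV: "\<And>t. t \<in> V \<Longrightarrow> p t \<in> V \<and> adj E t (p t) \<and> p (p t) = t"
    using p(1) unfolding matching_involution_def by blast
  have rS0: "r t \<in> S0" if "t \<in> V" for t using that p(2) unfolding r_def by auto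
  have same_edge: "t = y \<or> t = p y" if "t \<in> V" "y \<in> V" "r t = r y" for t y
    using that pV[of t] pV[of y] unfolding r_def by (cases "t \<in> S0"; cases "y \<in> S0") metis+
  have TV: "T \<subseteq> V" using T by (simp add: stable_set_def)
  have no_edge: "t \<noteq> p y" if "t \<in> T" "y \<in> T" for t y
    using that T pV[of y] TV by (auto simp: stable_set_def)
  have "inj_on r T"
  proof (rule inj_onI)
    fix t y assume "t \<in> T" "y \<in> T" "r t = r y"
    then show "t = y" using same_edge[of t y] no_edge[of t y] TV by auto
  qed
  moreover have "r ` T \<subseteq> S0 - {r x}"
  proof
    fix z assume "z \<in> r ` T"
    then obtain t where t: "t \<in> T" "z = r t" by blast
    then have "t \<in> V" using TV by blast
    moreover have "r t \<noteq> r x" using same_edge[OF \<open>t \<in> V\<close> x(1)] t(1) x(2,3) by blast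
    ultimately show "z \<in> S0 - {r x}" using rS0 t(2) by simp
  qed
  ultimately have "card T \<le> card (S0 - {r x})" using finS0 by (intro card_inj_on_le) auto
  also have "\<dots> < card S0" using rS0[OF x(1)] finS0 by (rule card_Diff1_less[rotated])
  finally show ?thesis .
qed

text \<open>Very well-covered graphs have a perfect matching with property P (Favaron): by Hall's
  theorem a maximum stable set S0 is matched into V - S0, which has the same size, and any
  maximal stable set missing both ends of a matching edge would be smaller than S0.\<close>
lemma very_well_covered_property_P:
  assumes sg: "simple_graph V E" and vwc: "very_well_covered V E"
  obtains p where "matching_involution V E p" "property_P V E p"
proof -
  have finV: "finite V" using sg by (rule simple_graph_finite)
  have wc: "well_covered V E" and no_isolated: "\<forall>v\<in>V. nbhd V E v \<noteq> {}"
    and cardV: "card V = 2 * alpha V E" using vwc by (auto simp: very_well_covered_def)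
  obtain S0 where S0: "stable_set V E S0" "card S0 = alpha V E" using alpha_attained[OF finV] .
  have S0V: "S0 \<subseteq> V" using S0(1) by (simp add: stable_set_def)
  have finS0: "finite S0" using finite_subset[OF S0V finV] .
  have "\<forall>a\<in>S0. finite (nbhd V E a)" using finV by (simp add: nbhd_def)
  then obtain f where f: "sdr S0 (nbhd V E) f"
    using hall_marriage[OF finS0 _ well_covered_hall_condition[OF sg wc no_isolated S0]] by blast
  have fadj: "adj E a (f a)" and fV: "f a \<in> V" if "a \<in> S0" for a
    using f that by (auto simp: sdr_def nbhd_def)
  have "f ` S0 \<subseteq> V - S0"
    using fadj fV S0(1) unfolding stable_set_def by blast
  moreover have "card (f ` S0) = card (V - S0)"
    using card_image[of f S0] f card_Diff_subset[OF finS0 S0V] cardV S0(2)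
    by (simp add: sdr_def)
  ultimately have "f ` S0 = V - S0" using finV by (intro card_subset_eq) auto
  then have bij: "bij_betw f S0 (V - S0)" using f by (simp add: bij_betw_def sdr_def)
  moreover have "\<forall>a\<in>S0. adj E a (f a)" using fadj by blast
  ultimately obtain p where p: "matching_involution V E p" "\<forall>x\<in>V - S0. p x \<in> S0"
    using matching_involution_of_bij[OF S0V] by blast
  have "property_P V E p"
    unfolding property_P_def
  proof (intro allI impI, rule ccontr)
    fix T x assume T: "maximal_stable_set V E T" and x: "x \<in> V" "x \<notin> T" "p x \<notin> T"
    have "card T = card S0" using well_covered_card[OF sg wc T] S0(2) by simp
    moreover have "stable_set V E T" using T by (simp add: maximal_stable_set_def)
    ultimately show False using stable_missing_edge_card[OF finS0 p _ x] by simp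
  qed
  then show ?thesis using that p(1) by blast
qed

lemma open_nbhd_iff:
  "S \<subseteq> V \<Longrightarrow> v \<in> open_nbhd_set V E S \<longleftrightarrow> v \<in> V \<and> v \<notin> S \<and> (\<exists>s\<in>S. adj E v s)"
  unfolding open_nbhd_set_def nbhd_def by blast

lemma closed_nbhd_subset: "S \<subseteq> V \<Longrightarrow> closed_nbhd_set V E S \<subseteq> V"
  unfolding closed_nbhd_set_def open_nbhd_set_def by blast

lemma matching_involution_inj: "matching_involution V E p \<Longrightarrow> inj_on p V"
  unfolding matching_involution_def by (metis inj_onI)

lemma local_max_stableD:
  assumes "local_max_stable V E S"
  shows "S \<subseteq> V" "stable_set V E S"
    "\<And>Z. stable_set V E Z \<Longrightarrow> Z \<subseteq> closed_nbhd_set V E S \<Longrightarrow> card Z \<le> card S"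
proof -
  show SV: "S \<subseteq> V" using assms by (simp add: local_max_stable_def)
  have sub: "closed_nbhd_set V E S \<subseteq> V" using SV by (rule closed_nbhd_subset)
  have max: "max_stable_set (closed_nbhd_set V E S) (induced_edges E (closed_nbhd_set V E S)) S"
    using assms by (simp add: local_max_stable_def)
  then show "stable_set V E S"
    using stable_induced_iff[OF sub] by (simp add: max_stable_set_def)
  fix Z assume "stable_set V E Z" "Z \<subseteq> closed_nbhd_set V E S"
  then show "card Z \<le> card S"
    using max stable_induced_iff[OF sub] by (simp add: max_stable_set_def)
qed

lemma partner_in_open_nbhd:
  assumes p: "matching_involution V E p" and S: "stable_set V E S" and s: "s \<in> S"
  shows "p s \<in> open_nbhd_set V E S"
proof -
  have SV: "S \<subseteq> V" using S by (simp add: stable_set_def)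
  have ps: "p s \<in> V" "adj E s (p s)" using p s SV unfolding matching_involution_def by auto
  then have "p s \<notin> S" using S s unfolding stable_set_def by blast
  then show ?thesis using ps adj_sym[OF ps(2)] s SV open_nbhd_iff[OF SV] by blast
qed

text \<open>Otherwise extend
  {v} \<union> (S - N(v)) to a maximal stable set T; by property P it contains the partners of
  S \<inter> N(v), and these together with {v} \<union> (S - N(v)) form a stable subset of N[S] of
  size |S| + 1.\<close>
lemma partner_of_open_nbhd_in_local_max:
  assumes sg: "simple_graph V E" and p: "matching_involution V E p" "property_P V E p"
    and S: "local_max_stable V E S" and v: "v \<in> open_nbhd_set V E S"
  shows "p v \<in> S"
proof (rule ccontr)
  assume pv: "p v \<notin> S"
  have SV: "S \<subseteq> V" and stS: "stable_set V E S" using local_max_stableD[OF S] by auto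
  have finS: "finite S" using finite_subset[OF SV simple_graph_finite[OF sg]] .
  have vV: "v \<in> V" and vS: "v \<notin> S" using v open_nbhd_iff[OF SV] by auto
  define Nv where "Nv = {s\<in>S. adj E v s}"
  have "stable_set V E (S - Nv)" using stable_subset[OF stS] by blast
  moreover have "\<forall>s\<in>S - Nv. \<not> adj E v s" unfolding Nv_def by blast
  ultimately have "stable_set V E (insert v (S - Nv))" using stable_insert[OF sg _ vV] by blast
  then obtain T where T: "maximal_stable_set V E T" "insert v (S - Nv) \<subseteq> T"
    using maximal_stable_extension[OF sg] by blast
  have stT: "stable_set V E T" using T(1) by (simp add: maximal_stable_set_def)
  have pNv: "p ` Nv \<subseteq> T \<inter> open_nbhd_set V E S"
  proof
    fix x assume "x \<in> p ` Nv"
    then obtain s where s: "s \<in> Nv" "x = p s" by blast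
    have "v \<in> T" "adj E v s" using s(1) T(2) unfolding Nv_def by auto
    then have "s \<notin> T" using stT unfolding stable_set_def by blast
    moreover have "s \<in> V" using s(1) SV unfolding Nv_def by blast
    ultimately have "p s \<in> T" using p(2) T(1) unfolding property_P_def by blast
    moreover have "p s \<in> open_nbhd_set V E S"
      using partner_in_open_nbhd[OF p(1) stS] s(1) unfolding Nv_def by blast
    ultimately show "x \<in> T \<inter> open_nbhd_set V E S" using s(2) by blast
  qed
  define W where "W = insert v ((S - Nv) \<union> p ` Nv)"
  have "W \<subseteq> T" "W \<subseteq> closed_nbhd_set V E S"
    using T(2) pNv v unfolding W_def closed_nbhd_set_def by blast+
  then have "card W \<le> card S"
    using local_max_stableD(3)[OF S stable_subset[OF stT]] by blast
  moreover have "card W = card S + 1"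
  proof -
    have NvS: "Nv \<subseteq> S" unfolding Nv_def by blast
    have "v \<notin> p ` Nv"
    proof
      assume "v \<in> p ` Nv"
      then obtain s where s: "s \<in> Nv" "v = p s" by blast
      then have "s \<in> V" using NvS SV by blast
      then have "p v = s" using p(1) s(2) unfolding matching_involution_def by simp
      then show False using pv NvS s(1) by blast
    qed
    moreover have "(S - Nv) \<inter> p ` Nv = {}"
      using pNv open_nbhd_iff[OF SV] by blast
    moreover have "card (p ` Nv) = card Nv"
      using inj_on_subset[OF matching_involution_inj[OF p(1)]] NvS SV by (meson card_image subset_trans)
    moreover have "finite Nv" using finite_subset[OF NvS finS] .
    ultimately show ?thesis
      using vS finS NvS card_Un_disjoint[of "S - Nv" "p ` Nv"] card_Diff_subset[of Nv S]
        card_mono[OF finS NvS] unfolding W_def by simp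
  qed
  ultimately show False by simp
qed

lemma involution_matching:
  assumes p: "matching_involution V E p" and W: "C \<subseteq> W" "W \<subseteq> V" "p ` C \<subseteq> W - C"
  defines "M \<equiv> (\<lambda>v. {v, p v}) ` C"
  shows "matching (induced_edges E W) M" "card M = card C"
proof -
  have pv: "p v \<in> W" "p v \<notin> C" "adj E v (p v)" if "v \<in> C" for v
    using that W p unfolding matching_involution_def by blast+
  have inj: "inj_on p V" by (rule matching_involution_inj[OF p])
  show "matching (induced_edges E W) M"
    unfolding matching_def M_def
  proof (intro conjI ballI impI)
    show "(\<lambda>v. {v, p v}) ` C \<subseteq> induced_edges E W"
      using pv W(1) unfolding induced_edges_def adj_def by blast
    fix e1 e2 assume e: "e1 \<in> (\<lambda>v. {v, p v}) ` C" "e2 \<in> (\<lambda>v. {v, p v}) ` C" "e1 \<noteq> e2"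
    then obtain v1 v2 where v: "v1 \<in> C" "v2 \<in> C" "e1 = {v1, p v1}" "e2 = {v2, p v2}" by blast
    then have "v1 \<noteq> v2" using e(3) by blast
    moreover have "p v1 \<noteq> p v2" using inj v W calculation by (meson inj_on_contraD subsetD)
    ultimately show "e1 \<inter> e2 = {}" using v pv by auto
  qed
  have "inj_on (\<lambda>v. {v, p v}) C"
    by (rule inj_onI) (use pv in \<open>auto simp: doubleton_eq_iff\<close>)
  then show "card M = card C" unfolding M_def by (rule card_image)
qed

theorem theorem7:
  fixes V :: "'a set" and E :: "'a set set" and S :: "'a set"
  assumes "simple_graph V E"
    and "very_well_covered V E"
    and "S \<in> Psi V E"
  shows "koenig_egervary (closed_nbhd_set V E S)
           (induced_edges E (closed_nbhd_set V E S))"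
proof -
  obtain p where p: "matching_involution V E p" "property_P V E p"
    using very_well_covered_property_P[OF assms(1,2)] .
  have S: "local_max_stable V E S" using assms(3) by (simp add: Psi_def)
  have SV: "S \<subseteq> V" using local_max_stableD(1)[OF S] .
  define NS where "NS = closed_nbhd_set V E S"
  define ON where "ON = open_nbhd_set V E S"
  have NSV: "NS \<subseteq> V" unfolding NS_def using SV by (rule closed_nbhd_subset)
  have ON: "ON \<subseteq> NS" "NS - ON = S" "NS - S = ON"
    using open_nbhd_iff[OF SV] unfolding NS_def ON_def closed_nbhd_set_def by auto
  have "p ` ON \<subseteq> NS - ON"
    using partner_of_open_nbhd_in_local_max[OF assms(1) p S] ON(2) unfolding ON_def by blast
  from involution_matching[OF p(1) ON(1) NSV this]
  obtain M where "matching (induced_edges E NS) M" "card M = card (NS - S)"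
    using ON(3) by metis
  moreover have "max_stable_set NS (induced_edges E NS) S"
    using S unfolding local_max_stable_def NS_def by blast
  ultimately show ?thesis
    unfolding NS_def[symmetric]
    using koenig_egervary_witness[OF simple_graph_induced[OF assms(1) NSV]] by blast
qed

end
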